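(* Let $\mathcal E$ be an environment and $t_0,t_1$ closed normal forms with $t_0\approx_{\mathcal E}t_1$. Then for every context $C$ such that $C[t_0]$ and $C[t_1]$ are closed, $C[t_0]\approx_{\mathcal E}C[t_1]$.
   Context: Terms of $\lambda_S$: $t ::= x \mid \lambda x.t \mid t\,t \mid \mathcal{S}k.t \mid \langle t\rangle$ (shift binds $k$; $\langle\cdot\rangle$ reset), up to $\alpha$-conversion. Values $v::=\lambda x.t$. Pure contexts $E ::= \Box \mid v\,E \mid E\,t$; evaluation contexts $F ::= \Box \mid v\,F \mid F\,t \mid \langle F\rangle$; contexts $C ::= \Box \mid \lambda x.C \mid t\,C \mid C\,t \mid \mathcal{S}k.C \mid \langle C\rangle$. Reduction: $F[(\lambda x.t)v]\to F[t\{v/x\}]$; $F[\langle E[\mathcal Sk.t]\rangle]\to F[\langle t\{\lambda x.\langle E[x]\rangle/k\}\rangle]$ ($x\notin\mathrm{fv}(E)$); $F[\langle v\rangle]\to F[v]$; $\to^*$ reflexive-transitive closure. Stuck term: not a value and irreducible; normal form: value or stuck term. Closures: for $R$ a relation on closed terms, $\widetilde R$ is the smallest relation containing $R$, all $(x,x)$, closed under all term constructors, restricted to closed terms; $\widehat R$ is the smallest relation on closed evaluation contexts with $\Box\widehat R\Box$, $v_0F_0\widehat Rv_1F_1$ if $F_0\widehat RF_1,v_0\widetilde Rv_1$; $F_0t_0\widehat RF_1t_1$ if $F_0\widehat RF_1,t_0\widetilde Rt_1$; $\langle F_0\rangle\widehat R\langle F_1\rangle$ if $F_0\widehat RF_1$.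 Environmental bisimilarity: an environment $\mathcal E$ is a relation on closed normal forms relating values only with values and stuck terms only with stuck terms; an environmental relation $\mathcal X$ is a set of environments and triples $(\mathcal E,t_0,t_1)$ with $t_0,t_1$ closed, written $t_0\mathcal X_{\mathcal E}t_1$. $\mathcal X$ is an environmental bisimulation if (1) whenever $t_0\mathcal X_{\mathcal E}t_1$: (a) $t_0\to t_0'$ implies $t_1\to^*t_1'$ with $t_0'\mathcal X_{\mathcal E}t_1'$; (b) if $t_0$ is a value $v_0$ then $t_1\to^*v_1$, a value, with $\mathcal E\cup\{(v_0,v_1)\}\in\mathcal X$; (c) if $t_0$ is stuck then $t_1\to^*t_1'$ stuck with $\mathcal E\cup\{(t_0,t_1')\}\in\mathcal X$; (d) symmetric conditions for $t_1$; (2) whenever $\mathcal E\in\mathcal X$: (a) $(\lambda x.t_0)\mathcal E(\lambda x.t_1)$ and $v_0\widetilde{\mathcal E}v_1$ imply $t_0\{v_0/x\}\mathcal X_{\mathcal E}t_1\{v_1/x\}$; (b) $E_0[\mathcal Sk.t_0]\mathcal EE_1[\mathcal Sk.t_1]$ and pure $E_0'\widehat{\mathcal E}E_1'$ imply $\langle t_0\{\lambda x.\langle E_0'[E_0[x]]\rangle/k\}\rangle\mathcal X_{\mathcal E}\langle t_1\{\lambda x.\langle E_1'[E_1[x]]\rangle/k\}\rangle$, $x$ fresh. $\approx$ is the largest environmental bisimulation; $t_0\approx_{\mathcal E}t_1$ means $(\mathcal E,t_0,t_1)\in\approx$. *)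

theory Defs
  imports Main
begin

section \<open>Terms of lambda_S (de Bruijn indices, i.e. terms up to alpha-conversion)\<close>

datatype trm =
    Var nat
  | Lam trm
  | App trm trm
  | Shift trm          (* S k.t, binds k = index 0 *)
  | Reset trm

fun lift :: "nat \<Rightarrow> trm \<Rightarrow> trm" where
  "lift k (Var i) = (if i < k then Var i else Var (Suc i))"
| "lift k (Lam t) = Lam (lift (Suc k) t)"
| "lift k (App t u) = App (lift k t) (lift k u)"
| "lift k (Shift t) = Shift (lift (Suc k) t)"
| "lift k (Reset t) = Reset (lift k t)"

fun subst :: "nat \<Rightarrow> trm \<Rightarrow> trm \<Rightarrow> trm" where
  "subst k s (Var i) = (if i < k then Var i else if i = k then s else Var (i - 1))"
| "subst k s (Lam t) = Lam (subst (Suc k) (lift 0 s) t)"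
| "subst k s (App t u) = App (subst k s t) (subst k s u)"
| "subst k s (Shift t) = Shift (subst (Suc k) (lift 0 s) t)"
| "subst k s (Reset t) = Reset (subst k s t)"

(* t{v/x} where x is the bound variable (index 0) of the body t *)
definition inst :: "trm \<Rightarrow> trm \<Rightarrow> trm" where
  "inst t v = subst 0 v t"

fun closed_at :: "nat \<Rightarrow> trm \<Rightarrow> bool" where
  "closed_at n (Var i) = (i < n)"
| "closed_at n (Lam t) = closed_at (Suc n) t"
| "closed_at n (App t u) = (closed_at n t \<and> closed_at n u)"
| "closed_at n (Shift t) = closed_at (Suc n) t"
| "closed_at n (Reset t) = closed_at n t"

definition closed :: "trm \<Rightarrow> bool" where
  "closed t = closed_at 0 t"

fun is_val :: "trm \<Rightarrow> bool" where
  "is_val (Lam t) = True"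
| "is_val _ = False"

section \<open>Evaluation contexts (F) and pure contexts (E)\<close>

datatype ectx =
    Hole
  | ArgC trm ectx
  | FunC ectx trm
  | ResetC ectx

fun plugF :: "ectx \<Rightarrow> trm \<Rightarrow> trm" where
  "plugF Hole t = t"
| "plugF (ArgC v F) t = App v (plugF F t)"
| "plugF (FunC F u) t = App (plugF F t) u"
| "plugF (ResetC F) t = Reset (plugF F t)"

fun liftF :: "ectx \<Rightarrow> ectx" where
  "liftF Hole = Hole"
| "liftF (ArgC v F) = ArgC (lift 0 v) (liftF F)"
| "liftF (FunC F u) = FunC (liftF F) (lift 0 u)"
| "liftF (ResetC F) = ResetC (liftF F)"

fun evalctx :: "ectx \<Rightarrow> bool" where
  "evalctx Hole = True"
| "evalctx (ArgC v F) = (is_val v \<and> evalctx F)"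
| "evalctx (FunC F u) = evalctx F"
| "evalctx (ResetC F) = evalctx F"

fun pure :: "ectx \<Rightarrow> bool" where
  "pure Hole = True"
| "pure (ArgC v F) = (is_val v \<and> pure F)"
| "pure (FunC F u) = pure F"
| "pure (ResetC F) = False"

fun closedF :: "ectx \<Rightarrow> bool" where
  "closedF Hole = True"
| "closedF (ArgC v F) = (closed v \<and> closedF F)"
| "closedF (FunC F u) = (closedF F \<and> closed u)"
| "closedF (ResetC F) = closedF F"

section \<open>General contexts C\<close>

datatype ctx =
    CHole
  | CLam ctx
  | CAppR trm ctx
  | CAppL ctx trm
  | CShift ctx
  | CReset ctx

(* plugging may capture variables (no renaming) *)
fun plugC :: "ctx \<Rightarrow> trm \<Rightarrow> trm" where
  "plugC CHole t = t"
| "plugC (CLam C) t = Lam (plugC C t)"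
| "plugC (CAppR u C) t = App u (plugC C t)"
| "plugC (CAppL C u) t = App (plugC C t) u"
| "plugC (CShift C) t = Shift (plugC C t)"
| "plugC (CReset C) t = Reset (plugC C t)"

section \<open>Reduction\<close>

inductive step :: "trm \<Rightarrow> trm \<Rightarrow> bool" where
  beta: "\<lbrakk> evalctx F; is_val v \<rbrakk> \<Longrightarrow>
     step (plugF F (App (Lam t) v)) (plugF F (inst t v))"
| shift: "\<lbrakk> evalctx F; pure E \<rbrakk> \<Longrightarrow>
     step (plugF F (Reset (plugF E (Shift t))))
          (plugF F (Reset (inst t (Lam (Reset (plugF (liftF E) (Var 0)))))))"
| reset: "\<lbrakk> evalctx F; is_val v \<rbrakk> \<Longrightarrow>
     step (plugF F (Reset v)) (plugF F v)"

abbreviation steps :: "trm \<Rightarrow> trm \<Rightarrow> bool" where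
  "steps \<equiv> step\<^sup>*\<^sup>*"

definition stuck :: "trm \<Rightarrow> bool" where
  "stuck t \<longleftrightarrow> \<not> is_val t \<and> (\<nexists>u. step t u)"

definition normal_form :: "trm \<Rightarrow> bool" where
  "normal_form t \<longleftrightarrow> is_val t \<or> stuck t"

section \<open>Closures of relations\<close>

inductive tilde_aux :: "trm rel \<Rightarrow> trm \<Rightarrow> trm \<Rightarrow> bool" for R where
  base: "(t0, t1) \<in> R \<Longrightarrow> tilde_aux R t0 t1"
| var: "tilde_aux R (Var i) (Var i)"
| lam: "tilde_aux R t0 t1 \<Longrightarrow> tilde_aux R (Lam t0) (Lam t1)"
| app: "\<lbrakk> tilde_aux R t0 t1; tilde_aux R u0 u1 \<rbrakk> \<Longrightarrow> tilde_aux R (App t0 u0) (App t1 u1)"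
| shift: "tilde_aux R t0 t1 \<Longrightarrow> tilde_aux R (Shift t0) (Shift t1)"
| reset: "tilde_aux R t0 t1 \<Longrightarrow> tilde_aux R (Reset t0) (Reset t1)"

definition tilde :: "trm rel \<Rightarrow> trm \<Rightarrow> trm \<Rightarrow> bool" where
  "tilde R t0 t1 \<longleftrightarrow> tilde_aux R t0 t1 \<and> closed t0 \<and> closed t1"

inductive hat :: "trm rel \<Rightarrow> ectx \<Rightarrow> ectx \<Rightarrow> bool" for R where
  hole: "hat R Hole Hole"
| arg: "\<lbrakk> hat R F0 F1; tilde R v0 v1; is_val v0; is_val v1 \<rbrakk> \<Longrightarrow> hat R (ArgC v0 F0) (ArgC v1 F1)"
| func: "\<lbrakk> hat R F0 F1; tilde R t0 t1 \<rbrakk> \<Longrightarrow> hat R (FunC F0 t0) (FunC F1 t1)"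
| reset: "hat R F0 F1 \<Longrightarrow> hat R (ResetC F0) (ResetC F1)"

section \<open>Environmental bisimilarity\<close>

definition is_env :: "trm rel \<Rightarrow> bool" where
  "is_env \<E> \<longleftrightarrow> (\<forall>(a, b) \<in> \<E>. closed a \<and> closed b \<and>
      ((is_val a \<and> is_val b) \<or> (stuck a \<and> stuck b)))"

type_synonym envrel = "trm rel set \<times> (trm rel \<times> trm \<times> trm) set"

definition is_envrel :: "envrel \<Rightarrow> bool" where
  "is_envrel X \<longleftrightarrow> (\<forall>\<E> \<in> fst X. is_env \<E>) \<and>
     (\<forall>(\<E>, t0, t1) \<in> snd X. is_env \<E> \<and> closed t0 \<and> closed t1)"

definition env_bisim :: "envrel \<Rightarrow> bool" where
  "env_bisim X \<longleftrightarrow> is_envrel X \<and>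
   (\<forall>\<E> t0 t1. (\<E>, t0, t1) \<in> snd X \<longrightarrow>
      (\<forall>t0'. step t0 t0' \<longrightarrow> (\<exists>t1'. steps t1 t1' \<and> (\<E>, t0', t1') \<in> snd X)) \<and>
      (is_val t0 \<longrightarrow> (\<exists>v1. steps t1 v1 \<and> is_val v1 \<and> \<E> \<union> {(t0, v1)} \<in> fst X)) \<and>
      (stuck t0 \<longrightarrow> (\<exists>t1'. steps t1 t1' \<and> stuck t1' \<and> \<E> \<union> {(t0, t1')} \<in> fst X)) \<and>
      (\<forall>t1'. step t1 t1' \<longrightarrow> (\<exists>t0'. steps t0 t0' \<and> (\<E>, t0', t1') \<in> snd X)) \<and>
      (is_val t1 \<longrightarrow> (\<exists>v0. steps t0 v0 \<and> is_val v0 \<and> \<E> \<union> {(v0, t1)} \<in> fst X)) \<and>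
      (stuck t1 \<longrightarrow> (\<exists>t0'. steps t0 t0' \<and> stuck t0' \<and> \<E> \<union> {(t0', t1)} \<in> fst X))) \<and>
   (\<forall>\<E> \<in> fst X.
      (\<forall>b0 b1 v0 v1. (Lam b0, Lam b1) \<in> \<E> \<longrightarrow> is_val v0 \<longrightarrow> is_val v1 \<longrightarrow>
           tilde \<E> v0 v1 \<longrightarrow> (\<E>, inst b0 v0, inst b1 v1) \<in> snd X) \<and>
      (\<forall>E0 E1 s0 s1 E0' E1'. pure E0 \<longrightarrow> pure E1 \<longrightarrow>
           (plugF E0 (Shift s0), plugF E1 (Shift s1)) \<in> \<E> \<longrightarrow>
           pure E0' \<longrightarrow> pure E1' \<longrightarrow> hat \<E> E0' E1' \<longrightarrow>
           (\<E>,
            Reset (inst s0 (Lam (Reset (plugF (liftF E0') (plugF (liftF E0) (Var 0)))))),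
            Reset (inst s1 (Lam (Reset (plugF (liftF E1') (plugF (liftF E1) (Var 0))))))) \<in> snd X))"

(* t0 \<approx>_E t1 : membership in the largest environmental bisimulation (the union of all) *)
definition bisimilar :: "trm rel \<Rightarrow> trm \<Rightarrow> trm \<Rightarrow> bool" where
  "bisimilar \<E> t0 t1 \<longleftrightarrow> (\<exists>X. env_bisim X \<and> (\<E>, t0, t1) \<in> snd X)"

end

theory Submission
  imports Defs
begin

text \<open>Take an environmental bisimulation X containing the triple for
  t0 and t1. Since both are normal forms, X also contains the environment extended by (t0, t1), so
  C[t0] and C[t1] are related by the context closure of that environment. It remains to show that
  relating terms by the context closure of an environment of X (possibly with one triple of X
  plugged into related evaluation contexts) yields again an environmental bisimulation. A reduction
  of a term in the closure either happens inside the closure, or fires a redex whose function or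
  captured context comes from the environment; in the latter case clause (2) of X supplies the
  continuation. Backward simulation follows by applying the forward argument to the converse.\<close>

section \<open>Substitution and closed terms\<close>

lemma closed_at_mono: "closed_at n t \<Longrightarrow> n \<le> m \<Longrightarrow> closed_at m t"
  by (induction n t arbitrary: m rule: closed_at.induct) auto

lemma lift_closed_at: "closed_at k t \<Longrightarrow> lift k t = t"
  by (induction k t rule: lift.induct) auto

lemma lift_closed: "closed t \<Longrightarrow> lift k t = t"
  unfolding closed_def by (meson closed_at_mono le0 lift_closed_at)

lemma subst_closed_at: "closed_at k t \<Longrightarrow> subst k s t = t"
  by (induction k s t rule: subst.induct) auto

lemma subst_closed: "closed t \<Longrightarrow> subst k s t = t"
  unfolding closed_def by (meson closed_at_mono le0 subst_closed_at)

lemma closed_at_lift: "closed_at n t \<Longrightarrow> closed_at (Suc n) (lift k t)"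
  by (induction k t arbitrary: n rule: lift.induct) auto

lemma closed_at_subst:
  "closed_at (Suc n) t \<Longrightarrow> k \<le> n \<Longrightarrow> closed_at n s \<Longrightarrow> closed_at n (subst k s t)"
  by (induction k s t arbitrary: n rule: subst.induct) (auto simp: closed_at_lift)

lemma closed_inst: "closed_at (Suc 0) t \<Longrightarrow> closed v \<Longrightarrow> closed (inst t v)"
  unfolding closed_def inst_def by (rule closed_at_subst) auto

lemma closed_App [simp]: "closed (App t u) \<longleftrightarrow> closed t \<and> closed u"
  by (simp add: closed_def)

lemma closed_Reset [simp]: "closed (Reset t) \<longleftrightarrow> closed t"
  by (simp add: closed_def)

section \<open>Evaluation contexts and reduction\<close>

fun compF :: "ectx \<Rightarrow> ectx \<Rightarrow> ectx" where
  "compF Hole G = G"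
| "compF (ArgC v F) G = ArgC v (compF F G)"
| "compF (FunC F u) G = FunC (compF F G) u"
| "compF (ResetC F) G = ResetC (compF F G)"

lemma plugF_compF [simp]: "plugF (compF F G) t = plugF F (plugF G t)"
  by (induction F) auto

lemma liftF_compF [simp]: "liftF (compF F G) = compF (liftF F) (liftF G)"
  by (induction F) auto

lemma evalctx_compF [simp]: "evalctx F \<Longrightarrow> evalctx G \<Longrightarrow> evalctx (compF F G)"
  by (induction F) auto

lemma pure_compF [simp]: "pure F \<Longrightarrow> pure G \<Longrightarrow> pure (compF F G)"
  by (induction F) auto

lemma closed_at_plugF: "closed_at n (plugF F t) \<Longrightarrow> closed_at n t"
  by (induction F) auto

lemma closed_plugF: "closed (plugF F t) \<Longrightarrow> closed t"
  unfolding closed_def by (rule closed_at_plugF)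

lemma closed_at_plugF_replace: "closed_at n (plugF F t) \<Longrightarrow> closed_at n u \<Longrightarrow> closed_at n (plugF F u)"
  by (induction F) auto

lemma closed_at_plugF_liftF:
  "closed_at n (plugF F t) \<Longrightarrow> closed_at (Suc n) u \<Longrightarrow> closed_at (Suc n) (plugF (liftF F) u)"
  by (induction F) (auto simp: closed_at_lift)

lemma plugF_Shift_not_val: "\<not> is_val (plugF F (Shift s))"
  by (cases F) auto

lemma plugF_Shift_inject:
  "pure E \<Longrightarrow> pure E' \<Longrightarrow> plugF E (Shift s) = plugF E' (Shift s') \<Longrightarrow> E = E' \<and> s = s'"
proof (induction E arbitrary: E')
  case Hole then show ?case by (cases E') auto
next
  case (ArgC v E) then show ?case by (cases E') (auto simp: plugF_Shift_not_val)
next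
  case (FunC E u) then show ?case by (cases E') (auto simp: plugF_Shift_not_val)
qed simp

abbreviation shift_reduct :: "trm \<Rightarrow> ectx \<Rightarrow> trm" where
  "shift_reduct s E \<equiv> Reset (inst s (Lam (Reset (plugF (liftF E) (Var 0)))))"

inductive head_step :: "trm \<Rightarrow> trm \<Rightarrow> bool" where
  beta: "is_val v \<Longrightarrow> head_step (App (Lam t) v) (inst t v)"
| shift: "pure E \<Longrightarrow> head_step (Reset (plugF E (Shift t))) (shift_reduct t E)"
| reset: "is_val v \<Longrightarrow> head_step (Reset v) v"

lemma step_iff_head_step:
  "step t t' \<longleftrightarrow> (\<exists>F r r'. evalctx F \<and> head_step r r' \<and> t = plugF F r \<and> t' = plugF F r')"
proof
  assume "step t t'"
  then show "\<exists>F r r'. evalctx F \<and> head_step r r' \<and> t = plugF F r \<and> t' = plugF F r'"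
    by cases (blast intro: head_step.intros)+
next
  assume "\<exists>F r r'. evalctx F \<and> head_step r r' \<and> t = plugF F r \<and> t' = plugF F r'"
  then show "step t t'" by (auto elim!: head_step.cases intro: step.intros)
qed

lemma head_step_step: "head_step r r' \<Longrightarrow> step r r'"
  using step_iff_head_step[of r r'] by (metis evalctx.simps(1) plugF.simps(1))

lemma step_plugF: "step t t' \<Longrightarrow> evalctx F \<Longrightarrow> step (plugF F t) (plugF F t')"
  unfolding step_iff_head_step by (metis evalctx_compF plugF_compF)

lemma steps_plugF: "steps t t' \<Longrightarrow> evalctx F \<Longrightarrow> steps (plugF F t) (plugF F t')"
  by (induction rule: rtranclp_induct) (auto intro: rtranclp.rtrancl_into_rtrancl step_plugF)

lemma head_step_closed: "head_step r r' \<Longrightarrow> closed r \<Longrightarrow> closed r'"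
proof (induction rule: head_step.induct)
  case (beta v t) then show ?case by (metis closed_App closed_def closed_at.simps(2) closed_inst)
next
  case (shift E t)
  then have "closed_at 0 (plugF E (Shift t))" by (simp add: closed_def)
  then show ?case
    by (auto simp: closed_def inst_def intro!: closed_at_subst closed_at_plugF_liftF
        dest: closed_at_plugF[of 0 E "Shift t"])
qed simp

lemma step_closed: "step t t' \<Longrightarrow> closed t \<Longrightarrow> closed t'"
  unfolding step_iff_head_step closed_def
  by (metis closed_at_plugF closed_at_plugF_replace closed_def head_step_closed)

lemma steps_closed: "steps t t' \<Longrightarrow> closed t \<Longrightarrow> closed t'"
  by (induction rule: rtranclp_induct) (auto dest: step_closed)

text \<open>Reduction presented by congruence rules, on which inversion is easy.\<close>

inductive sstep :: "trm \<Rightarrow> trm \<Rightarrow> bool" where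
  head: "head_step t t' \<Longrightarrow> sstep t t'"
| appL: "sstep t t' \<Longrightarrow> sstep (App t u) (App t' u)"
| appR: "is_val v \<Longrightarrow> sstep u u' \<Longrightarrow> sstep (App v u) (App v u')"
| reset: "sstep t t' \<Longrightarrow> sstep (Reset t) (Reset t')"

lemma sstep_plugF: "sstep t t' \<Longrightarrow> evalctx F \<Longrightarrow> sstep (plugF F t) (plugF F t')"
  by (induction F) (auto intro: sstep.intros)

lemma step_iff_sstep: "step t t' \<longleftrightarrow> sstep t t'"
proof
  show "step t t' \<Longrightarrow> sstep t t'"
    unfolding step_iff_head_step by (auto intro: sstep_plugF sstep.head)
  show "sstep t t' \<Longrightarrow> step t t'"
  proof (induction rule: sstep.induct)
    case (appL t t' u) then show ?case using step_plugF[of t t' "FunC Hole u"] by simp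
  next
    case (appR v u u') then show ?case using step_plugF[of u u' "ArgC v Hole"] by simp
  next
    case (reset t t') then show ?case using step_plugF[of t t' "ResetC Hole"] by simp
  qed (rule head_step_step)
qed

inductive_cases sstep_AppE: "sstep (App t u) b"
inductive_cases sstep_ResetE: "sstep (Reset t) b"
inductive_cases head_step_AppE: "head_step (App t u) b"
inductive_cases head_step_ResetE: "head_step (Reset t) b"

lemma val_not_sstep: "is_val v \<Longrightarrow> \<not> sstep v t"
  by (cases v) (auto elim: sstep.cases head_step.cases)

lemma shift_form_not_sstep: "pure E \<Longrightarrow> \<not> sstep (plugF E (Shift s)) t"
proof (induction E arbitrary: t)
  case Hole then show ?case by (auto elim: sstep.cases head_step.cases)
next
  case (ArgC v E) then show ?case
    by (auto elim!: sstep_AppE head_step_AppE simp: val_not_sstep plugF_Shift_not_val)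
next
  case (FunC E u) then show ?case
    by (auto elim!: sstep_AppE head_step_AppE simp: plugF_Shift_not_val)
      (metis is_val.simps(1) plugF_Shift_not_val)
qed simp

lemma head_step_deterministic: "head_step r a \<Longrightarrow> head_step r b \<Longrightarrow> a = b"
proof (induction rule: head_step.induct)
  case (beta v t) then show ?case by (auto elim: head_step_AppE)
next
  case (shift E t)
  from shift.prems show ?case
  proof (cases rule: head_step.cases)
    case (shift E' t')
    with plugF_Shift_inject[of E E' t t'] \<open>pure E\<close> show ?thesis by simp
  qed (auto simp: plugF_Shift_not_val)
next
  case (reset v) then show ?case by (auto elim: head_step_ResetE simp: plugF_Shift_not_val)
qed

lemma head_step_subterms_irreducible:
  "head_step (App t u) a \<Longrightarrow> \<not> sstep t t'"
  "head_step (App t u) a \<Longrightarrow> \<not> sstep u u'"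
  "head_step (Reset t) a \<Longrightarrow> \<not> sstep t t'"
  by (auto elim: head_step_AppE head_step_ResetE simp: val_not_sstep shift_form_not_sstep)

lemma sstep_deterministic: "sstep t a \<Longrightarrow> sstep t b \<Longrightarrow> a = b"
proof (induction arbitrary: b rule: sstep.induct)
  case (head t a)
  from head.prems show ?case
  proof cases
    case head then show ?thesis using \<open>head_step t a\<close> head_step_deterministic by blast
  qed (use head.hyps head_step_subterms_irreducible in blast)+
next
  case (appL t t' u)
  from appL.prems show ?case
    by (cases rule: sstep_AppE)
      (use appL head_step_subterms_irreducible val_not_sstep in blast)+
next
  case (appR v u u')
  from appR.prems show ?case
    by (cases rule: sstep_AppE)
      (use appR head_step_subterms_irreducible val_not_sstep in blast)+
next
  case (reset t t')
  from reset.prems show ?case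
    by (cases rule: sstep_ResetE) (use reset head_step_subterms_irreducible in blast)+
qed

lemma step_deterministic: "step t a \<Longrightarrow> step t b \<Longrightarrow> a = b"
  unfolding step_iff_sstep by (rule sstep_deterministic)

lemma progress:
  "closed t \<Longrightarrow> is_val t \<or> (\<exists>t'. sstep t t') \<or> (\<exists>E s. pure E \<and> t = plugF E (Shift s))"
proof (induction t)
  case (Var i) then show ?case by (simp add: closed_def)
next
  case (App t u)
  then have IHt: "is_val t \<or> (\<exists>t'. sstep t t') \<or> (\<exists>E s. pure E \<and> t = plugF E (Shift s))"
    and IHu: "is_val u \<or> (\<exists>u'. sstep u u') \<or> (\<exists>E s. pure E \<and> u = plugF E (Shift s))"
    by auto
  show ?case
  proof (cases "is_val t")
    case True
    then obtain b where t: "t = Lam b" by (cases t) auto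
    from IHu show ?thesis
    proof (elim disjE exE conjE)
      assume "is_val u" then show ?thesis using t by (auto intro: sstep.head head_step.beta)
    next
      fix u' assume "sstep u u'" then show ?thesis using True by (auto intro: sstep.appR)
    next
      fix E s assume "pure E" "u = plugF E (Shift s)"
      then show ?thesis using True by (intro disjI2 exI[of _ "ArgC t E"]) auto
    qed
  next
    case False
    from IHt False show ?thesis
    proof (elim disjE exE conjE)
      fix t' assume "sstep t t'" then show ?thesis by (auto intro: sstep.appL)
    next
      fix E s assume "pure E" "t = plugF E (Shift s)"
      then show ?thesis by (intro disjI2 exI[of _ "FunC E u"]) auto
    qed simp_all
  qed
next
  case (Shift t) then show ?case by (intro disjI2 exI[of _ Hole]) auto
next
  case (Reset t)
  from Reset.IH Reset.prems show ?case
    by (auto intro: sstep.reset sstep.head head_step.shift head_step.reset)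
qed simp

lemma stuck_shift_form: "closed t \<Longrightarrow> stuck t \<Longrightarrow> \<exists>E s. pure E \<and> t = plugF E (Shift s)"
  using progress[of t] unfolding stuck_def step_iff_sstep by blast

lemma val_no_step: "is_val v \<Longrightarrow> \<not> step v t"
  by (simp add: step_iff_sstep val_not_sstep)

lemma normal_form_no_step: "normal_form t \<Longrightarrow> \<not> step t u"
  unfolding normal_form_def stuck_def using val_no_step by blast

lemma steps_irreducible: "steps t u \<Longrightarrow> (\<And>x. \<not> step t x) \<Longrightarrow> u = t"
  by (erule converse_rtranclpE) auto

section \<open>Closures of relations\<close>

definition closed_rel :: "trm rel \<Rightarrow> bool" where
  "closed_rel R \<longleftrightarrow> (\<forall>(a, b) \<in> R. closed a \<and> closed b)"

lemma tilde_aux_refl: "tilde_aux R t t"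
  by (induction t) (auto intro: tilde_aux.intros)

lemma tilde_aux_mono: "tilde_aux R a b \<Longrightarrow> R \<subseteq> S \<Longrightarrow> tilde_aux S a b"
  by (induction rule: tilde_aux.induct) (auto intro: tilde_aux.intros)

lemma tilde_aux_converse_imp: "tilde_aux R a b \<Longrightarrow> tilde_aux (R\<inverse>) b a"
  by (induction rule: tilde_aux.induct) (auto intro: tilde_aux.intros)

lemma tilde_aux_converse: "tilde_aux (R\<inverse>) b a \<longleftrightarrow> tilde_aux R a b"
  using tilde_aux_converse_imp[of R a b] tilde_aux_converse_imp[of "R\<inverse>" b a] by auto

lemma tilde_converse: "tilde (R\<inverse>) b a \<longleftrightarrow> tilde R a b"
  unfolding tilde_def using tilde_aux_converse by blast

lemma tilde_mono: "tilde R a b \<Longrightarrow> R \<subseteq> S \<Longrightarrow> tilde S a b"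
  unfolding tilde_def using tilde_aux_mono by blast

lemma tilde_aux_lift: "tilde_aux R a b \<Longrightarrow> closed_rel R \<Longrightarrow> tilde_aux R (lift k a) (lift k b)"
proof (induction arbitrary: k rule: tilde_aux.induct)
  case (base t0 t1)
  then have "closed t0" "closed t1" by (auto simp: closed_rel_def)
  with base show ?case by (simp add: lift_closed tilde_aux.base)
qed (auto intro: tilde_aux.intros)

lemma tilde_aux_subst:
  "tilde_aux R a b \<Longrightarrow> closed_rel R \<Longrightarrow> tilde_aux R s0 s1 \<Longrightarrow>
   tilde_aux R (subst k s0 a) (subst k s1 b)"
proof (induction arbitrary: k s0 s1 rule: tilde_aux.induct)
  case (base t0 t1)
  then have "closed t0" "closed t1" by (auto simp: closed_rel_def)
  with base show ?case by (simp add: subst_closed tilde_aux.base)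
qed (simp_all add: tilde_aux.intros tilde_aux_lift)

lemma tilde_aux_inst:
  "tilde_aux R a b \<Longrightarrow> closed_rel R \<Longrightarrow> tilde_aux R v0 v1 \<Longrightarrow> tilde_aux R (inst a v0) (inst b v1)"
  unfolding inst_def by (rule tilde_aux_subst)

lemma tilde_aux_plugC: "tilde_aux R t0 t1 \<Longrightarrow> tilde_aux R (plugC C t0) (plugC C t1)"
  by (induction C) (auto intro: tilde_aux.intros tilde_aux_refl)

definition tilde_rel :: "trm rel \<Rightarrow> trm rel" where
  "tilde_rel R = {(a, b). tilde R a b}"

lemma tilde_rel_mono: "R \<subseteq> S \<Longrightarrow> tilde_rel R \<subseteq> tilde_rel S"
  unfolding tilde_rel_def using tilde_mono by blast

lemma tilde_rel_converse: "tilde_rel (R\<inverse>) = (tilde_rel R)\<inverse>"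
  unfolding tilde_rel_def using tilde_converse by auto

lemma tilde_aux_tilde_rel: "tilde_aux (tilde_rel R) a b \<Longrightarrow> tilde_aux R a b"
  by (induction rule: tilde_aux.induct) (auto intro: tilde_aux.intros simp: tilde_rel_def tilde_def)

lemma tilde_tilde_rel: "tilde (tilde_rel R) a b \<Longrightarrow> tilde R a b"
  unfolding tilde_def using tilde_aux_tilde_rel by blast

lemma hat_plugF: "hat R F0 F1 \<Longrightarrow> tilde_aux R t0 t1 \<Longrightarrow> tilde_aux R (plugF F0 t0) (plugF F1 t1)"
  by (induction rule: hat.induct) (auto intro: tilde_aux.intros simp: tilde_def)

lemma hat_plugF_liftF:
  "hat R F0 F1 \<Longrightarrow> closed_rel R \<Longrightarrow> tilde_aux R t0 t1 \<Longrightarrow>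
   tilde_aux R (plugF (liftF F0) t0) (plugF (liftF F1) t1)"
  by (induction rule: hat.induct) (auto intro: tilde_aux.intros tilde_aux_lift simp: tilde_def)

lemma hat_evalctx: "hat R F0 F1 \<Longrightarrow> evalctx F0 \<and> evalctx F1"
  by (induction rule: hat.induct) auto

lemma hat_mono: "hat R F0 F1 \<Longrightarrow> R \<subseteq> S \<Longrightarrow> hat S F0 F1"
  by (induction rule: hat.induct) (auto intro: hat.intros tilde_mono)

lemma hat_tilde_rel: "hat (tilde_rel R) F0 F1 \<Longrightarrow> hat R F0 F1"
  by (induction rule: hat.induct) (auto intro: hat.intros tilde_tilde_rel)

lemma hat_converse_imp: "hat R F0 F1 \<Longrightarrow> hat (R\<inverse>) F1 F0"
  by (induction rule: hat.induct) (auto intro: hat.intros simp: tilde_converse)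

lemma hat_converse: "hat (R\<inverse>) F1 F0 \<longleftrightarrow> hat R F0 F1"
  using hat_converse_imp[of R F0 F1] hat_converse_imp[of "R\<inverse>" F1 F0] by auto

lemma hat_compF: "hat R F0 F1 \<Longrightarrow> hat R G0 G1 \<Longrightarrow> hat R (compF F0 G0) (compF F1 G1)"
  by (induction rule: hat.induct) (auto intro: hat.intros)

lemma hat_closed: "hat R F0 F1 \<Longrightarrow> closed t \<Longrightarrow> closed (plugF F0 t) \<and> closed (plugF F1 t)"
  by (induction rule: hat.induct) (auto simp: tilde_def closed_def)

lemma is_env_closed_rel: "is_env R \<Longrightarrow> closed_rel R"
  unfolding is_env_def closed_rel_def by auto

lemma is_env_converse [simp]: "is_env (R\<inverse>) \<longleftrightarrow> is_env R"
  unfolding is_env_def by auto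

lemma is_env_insert:
  "is_env E \<Longrightarrow> closed a \<Longrightarrow> closed b \<Longrightarrow> (is_val a \<and> is_val b) \<or> (stuck a \<and> stuck b) \<Longrightarrow>
   is_env (E \<union> {(a, b)})"
  unfolding is_env_def by auto

lemma env_irreducible: "is_env R \<Longrightarrow> (a, b) \<in> R \<Longrightarrow> \<not> step a x \<and> \<not> step b y"
  unfolding is_env_def stuck_def using val_no_step by blast

lemma tilde_aux_is_val: "is_env R \<Longrightarrow> tilde_aux R v w \<Longrightarrow> is_val v \<longleftrightarrow> is_val w"
  by (erule tilde_aux.cases) (auto simp: is_env_def stuck_def)

section \<open>Reduction in the closure of an environment\<close>

inductive_cases tilde_aux_AppE [consumes 1, case_names base app]: "tilde_aux R (App t u) y"
inductive_cases tilde_aux_ResetE [consumes 1, case_names base reset]: "tilde_aux R (Reset t) y"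
inductive_cases tilde_aux_LamE [consumes 1, case_names base lam]: "tilde_aux R (Lam t) y"
inductive_cases tilde_aux_ShiftE [consumes 1, case_names base shift]: "tilde_aux R (Shift t) y"

lemma env_excludes_redex: "is_env R \<Longrightarrow> evalctx F \<Longrightarrow> head_step r r' \<Longrightarrow> (plugF F r, y) \<notin> R"
  using env_irreducible step_plugF head_step_step by blast

lemma tilde_aux_plugF_head_step:
  "is_env R \<Longrightarrow> evalctx F \<Longrightarrow> head_step r r' \<Longrightarrow> tilde_aux R (plugF F r) y \<Longrightarrow>
   closed (plugF F r) \<Longrightarrow> closed y \<Longrightarrow> \<exists>F1 r1. y = plugF F1 r1 \<and> hat R F F1 \<and> tilde_aux R r r1"
proof (induction F arbitrary: y)
  case Hole then show ?case by (intro exI[of _ Hole] exI[of _ y]) (simp add: hat.hole)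
next
  case (ArgC v F)
  from ArgC.prems(4) have "tilde_aux R (App v (plugF F r)) y" by simp
  then show ?case
  proof (cases rule: tilde_aux_AppE)
    case base then show ?thesis using env_excludes_redex[OF ArgC.prems(1-3), of y] by simp
  next
    case (app v1 y')
    with ArgC.prems obtain F1 r1 where "y' = plugF F1 r1" "hat R F F1" "tilde_aux R r r1"
      using ArgC.IH[of y'] by auto
    moreover have "is_val v1" "tilde R v v1"
      using app ArgC.prems tilde_aux_is_val[of R v v1] by (auto simp: tilde_def)
    ultimately show ?thesis using app ArgC.prems(2)
      by (intro exI[of _ "ArgC v1 F1"] exI[of _ r1]) (simp add: hat.arg)
  qed
next
  case (FunC F u)
  from FunC.prems(4) have "tilde_aux R (App (plugF F r) u) y" by simp
  then show ?case
  proof (cases rule: tilde_aux_AppE)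
    case base then show ?thesis using env_excludes_redex[OF FunC.prems(1-3), of y] by simp
  next
    case (app y' u1)
    with FunC.prems obtain F1 r1 where "y' = plugF F1 r1" "hat R F F1" "tilde_aux R r r1"
      using FunC.IH[of y'] by auto
    moreover have "tilde R u u1" using app FunC.prems by (simp add: tilde_def)
    ultimately show ?thesis using app
      by (intro exI[of _ "FunC F1 u1"] exI[of _ r1]) (simp add: hat.func)
  qed
next
  case (ResetC F)
  from ResetC.prems(4) have "tilde_aux R (Reset (plugF F r)) y" by simp
  then show ?case
  proof (cases rule: tilde_aux_ResetE)
    case base then show ?thesis using env_excludes_redex[OF ResetC.prems(1-3), of y] by simp
  next
    case (reset y')
    with ResetC.prems obtain F1 r1 where "y' = plugF F1 r1" "hat R F F1" "tilde_aux R r r1"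
      using ResetC.IH[of y'] by auto
    then show ?thesis using reset
      by (intro exI[of _ "ResetC F1"] exI[of _ r1]) (simp add: hat.reset)
  qed
qed

lemma env_shift_pair_decomp:
  assumes "is_env R" "pure E" "(plugF E (Shift s), y) \<in> R"
  shows "\<exists>G0 G1 E0 E1 s1. E = compF G0 E0 \<and> y = plugF G1 (plugF E1 (Shift s1)) \<and>
     hat R G0 G1 \<and> pure G0 \<and> pure G1 \<and> pure E0 \<and> pure E1 \<and>
     ((plugF E0 (Shift s), plugF E1 (Shift s1)) \<in> R \<or> E0 = Hole \<and> E1 = Hole \<and> tilde_aux R s s1)"
proof -
  have "stuck y" "closed y"
    using assms(1,3) plugF_Shift_not_val unfolding is_env_def by fastforce+
  then obtain E1 s1 where "pure E1" "y = plugF E1 (Shift s1)" using stuck_shift_form by blast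
  with assms(2,3) show ?thesis
    by (intro exI[of _ Hole] exI[of _ Hole] exI[of _ E] exI[of _ E1] exI[of _ s1]) (simp add: hat.hole)
qed

lemma tilde_aux_shift_form:
  "is_env R \<Longrightarrow> pure E \<Longrightarrow> tilde_aux R (plugF E (Shift s)) y \<Longrightarrow>
   closed (plugF E (Shift s)) \<Longrightarrow> closed y \<Longrightarrow>
   \<exists>G0 G1 E0 E1 s1. E = compF G0 E0 \<and> y = plugF G1 (plugF E1 (Shift s1)) \<and>
     hat R G0 G1 \<and> pure G0 \<and> pure G1 \<and> pure E0 \<and> pure E1 \<and>
     ((plugF E0 (Shift s), plugF E1 (Shift s1)) \<in> R \<or> E0 = Hole \<and> E1 = Hole \<and> tilde_aux R s s1)"
proof (induction E arbitrary: y)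
  case Hole
  from Hole.prems(3) have "tilde_aux R (Shift s) y" by simp
  then show ?case
  proof (cases rule: tilde_aux_ShiftE)
    case base then show ?thesis using env_shift_pair_decomp[of R Hole] Hole.prems(1) by simp
  next
    case (shift s1)
    then show ?thesis by (intro exI[of _ Hole] exI[of _ Hole] exI[of _ Hole] exI[of _ Hole]) (auto intro: hat.hole)
  qed
next
  case (ArgC v E)
  from ArgC.prems(3) have "tilde_aux R (App v (plugF E (Shift s))) y" by simp
  then show ?case
  proof (cases rule: tilde_aux_AppE)
    case base then show ?thesis using env_shift_pair_decomp ArgC.prems(1,2) by simp
  next
    case (app v1 y')
    moreover have "pure E" "closed (plugF E (Shift s))" "closed y'" using ArgC.prems app by auto
    ultimately obtain G0 G1 E0 E1 s1 where IH: "E = compF G0 E0" "y' = plugF G1 (plugF E1 (Shift s1))"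
      "hat R G0 G1" "pure G0" "pure G1" "pure E0" "pure E1"
      "(plugF E0 (Shift s), plugF E1 (Shift s1)) \<in> R \<or> E0 = Hole \<and> E1 = Hole \<and> tilde_aux R s s1"
      using ArgC.IH[OF ArgC.prems(1)] by blast
    have "is_val v1" "tilde R v v1"
      using app ArgC.prems tilde_aux_is_val[of R v v1] by (auto simp: tilde_def)
    with IH app ArgC.prems(2) show ?thesis
      by (intro exI[of _ "ArgC v G0"] exI[of _ "ArgC v1 G1"] exI[of _ E0] exI[of _ E1] exI[of _ s1])
        (simp add: hat.arg)
  qed
next
  case (FunC E u)
  from FunC.prems(3) have "tilde_aux R (App (plugF E (Shift s)) u) y" by simp
  then show ?case
  proof (cases rule: tilde_aux_AppE)
    case base then show ?thesis using env_shift_pair_decomp FunC.prems(1,2) by simp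
  next
    case (app y' u1)
    moreover have "pure E" "closed (plugF E (Shift s))" "closed y'" using FunC.prems app by auto
    ultimately obtain G0 G1 E0 E1 s1 where IH: "E = compF G0 E0" "y' = plugF G1 (plugF E1 (Shift s1))"
      "hat R G0 G1" "pure G0" "pure G1" "pure E0" "pure E1"
      "(plugF E0 (Shift s), plugF E1 (Shift s1)) \<in> R \<or> E0 = Hole \<and> E1 = Hole \<and> tilde_aux R s s1"
      using FunC.IH[OF FunC.prems(1)] by blast
    have "tilde R u u1" using app FunC.prems by (simp add: tilde_def)
    with IH app show ?thesis
      by (intro exI[of _ "FunC G0 u"] exI[of _ "FunC G1 u1"] exI[of _ E0] exI[of _ E1] exI[of _ s1])
        (simp add: hat.func)
  qed
qed simp

text \<open>The pairs that clause (2) of environmental bisimulation requires for an environment R.\<close>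

inductive env_test :: "trm rel \<Rightarrow> trm \<Rightarrow> trm \<Rightarrow> bool" for R where
  lam: "(Lam b0, Lam b1) \<in> R \<Longrightarrow> is_val v0 \<Longrightarrow> is_val v1 \<Longrightarrow> tilde R v0 v1 \<Longrightarrow>
    env_test R (inst b0 v0) (inst b1 v1)"
| shift: "pure E0 \<Longrightarrow> pure E1 \<Longrightarrow> (plugF E0 (Shift s0), plugF E1 (Shift s1)) \<in> R \<Longrightarrow>
    pure E0' \<Longrightarrow> pure E1' \<Longrightarrow> hat R E0' E1' \<Longrightarrow>
    env_test R (shift_reduct s0 (compF E0' E0)) (shift_reduct s1 (compF E1' E1))"

lemma env_test_converse: "env_test R u0 u1 \<Longrightarrow> env_test (R\<inverse>) u1 u0"
proof (induction rule: env_test.induct)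
  case (lam b0 b1 v0 v1)
  then show ?case using env_test.lam[of b1 b0 "R\<inverse>" v1 v0] by (simp add: tilde_converse)
next
  case (shift E0 E1 s0 s1 E0' E1')
  then show ?case using env_test.shift[of E1 E0 s1 s0 "R\<inverse>" E1' E0'] by (simp add: hat_converse)
qed

lemma env_test_closed: "env_test R u0 u1 \<Longrightarrow> closed_rel R \<Longrightarrow> closed u0 \<and> closed u1"
proof (induction rule: env_test.induct)
  case (lam b0 b1 v0 v1)
  then have "closed (Lam b0)" "closed (Lam b1)" "closed v0" "closed v1"
    by (auto simp: closed_rel_def tilde_def)
  then show ?case by (metis closed_def closed_at.simps(2) closed_inst)
next
  case (shift E0 E1 s0 s1 E0' E1')
  have "closed (plugF E0 (Shift s0))" "closed (plugF E1 (Shift s1))"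
    using shift.hyps(3) shift.prems by (auto simp: closed_rel_def)
  then have "closed (Reset (plugF (compF E0' E0) (Shift s0)))"
    "closed (Reset (plugF (compF E1' E1) (Shift s1)))"
    using hat_closed[OF shift.hyps(6)] by auto
  moreover have "head_step (Reset (plugF (compF E0' E0) (Shift s0))) (shift_reduct s0 (compF E0' E0))"
    "head_step (Reset (plugF (compF E1' E1) (Shift s1))) (shift_reduct s1 (compF E1' E1))"
    using shift.hyps by (simp_all only: head_step.shift pure_compF)
  ultimately show ?case using head_step_closed by blast
qed

lemma shift_reducts_related:
  assumes env: "is_env R" and G: "hat R G0 G1" "pure G0" "pure G1" and E: "pure E0" "pure E1"
    and rel: "(plugF E0 (Shift s0), plugF E1 (Shift s1)) \<in> R \<or> E0 = Hole \<and> E1 = Hole \<and> tilde_aux R s0 s1"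
  shows "tilde_aux R (shift_reduct s0 (compF G0 E0)) (shift_reduct s1 (compF G1 E1)) \<or>
         env_test R (shift_reduct s0 (compF G0 E0)) (shift_reduct s1 (compF G1 E1))"
  using rel
proof
  assume "(plugF E0 (Shift s0), plugF E1 (Shift s1)) \<in> R"
  then show ?thesis using env_test.shift[OF E _ G(2,3,1)] by blast
next
  assume holes: "E0 = Hole \<and> E1 = Hole \<and> tilde_aux R s0 s1"
  have "tilde_aux R (plugF (liftF G0) (Var 0)) (plugF (liftF G1) (Var 0))"
    using hat_plugF_liftF[OF G(1) is_env_closed_rel[OF env]] tilde_aux.var by blast
  then show ?thesis using holes tilde_aux_inst is_env_closed_rel[OF env]
    by (simp add: tilde_aux.lam tilde_aux.reset)
qed

lemma tilde_aux_beta_redex: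
  assumes env: "is_env R" and v: "is_val v" and func: "tilde_aux R (Lam b) a1"
    and arg: "tilde_aux R v w1" and closed: "closed v" "closed w1"
  shows "\<exists>r1'. head_step (App a1 w1) r1' \<and> (tilde_aux R (inst b v) r1' \<or> env_test R (inst b v) r1')"
proof -
  have w1: "is_val w1" "tilde R v w1"
    using tilde_aux_is_val[OF env arg] v arg closed by (auto simp: tilde_def)
  from func show ?thesis
  proof (cases rule: tilde_aux_LamE)
    case base
    then obtain b1 where "a1 = Lam b1"
      using env unfolding is_env_def stuck_def by (cases a1) fastforce+
    with base v w1 show ?thesis by (auto intro: head_step.beta env_test.lam)
  next
    case (lam b1)
    with v w1(1) arg show ?thesis
      by (auto intro: head_step.beta tilde_aux_inst is_env_closed_rel[OF env])
  qed
qed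

lemma tilde_aux_head_step:
  assumes env: "is_env R" and red: "head_step r r'" and rel: "tilde_aux R r r1"
    and "closed r" "closed r1"
  shows "\<exists>r1'. head_step r1 r1' \<and> (tilde_aux R r' r1' \<or> env_test R r' r1')"
proof -
  have not_base: "(r, r1) \<notin> R" using env_irreducible[OF env] head_step_step[OF red] by blast
  from red show ?thesis
  proof cases
    case (beta v b)
    from rel not_base obtain a1 w1 where "r1 = App a1 w1"
      and "tilde_aux R (Lam b) a1" "tilde_aux R v w1"
      unfolding beta by (cases rule: tilde_aux_AppE) auto
    with tilde_aux_beta_redex[OF env \<open>is_val v\<close>] beta \<open>closed r\<close> \<open>closed r1\<close> show ?thesis
      by simp
  next
    case (shift E s)
    from rel not_base obtain y where r1: "r1 = Reset y" and y: "tilde_aux R (plugF E (Shift s)) y"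
      unfolding shift by (cases rule: tilde_aux_ResetE) auto
    moreover have "closed (plugF E (Shift s))" "closed y" using \<open>closed r\<close> \<open>closed r1\<close> shift r1 by auto
    ultimately obtain G0 G1 E0 E1 s1 where E: "E = compF G0 E0" and y_eq: "y = plugF G1 (plugF E1 (Shift s1))"
      and ctx: "hat R G0 G1" "pure G0" "pure G1" "pure E0" "pure E1"
      and rel': "(plugF E0 (Shift s), plugF E1 (Shift s1)) \<in> R \<or> E0 = Hole \<and> E1 = Hole \<and> tilde_aux R s s1"
      using tilde_aux_shift_form[OF env \<open>pure E\<close>] by blast
    have "head_step r1 (shift_reduct s1 (compF G1 E1))"
      using head_step.shift[of "compF G1 E1" s1] ctx r1 y_eq by simp
    with shift_reducts_related[OF env ctx rel'] shift E show ?thesis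
      by (metis plugF_compF)
  next
    case reset
    from rel not_base obtain w where "r1 = Reset w" "tilde_aux R r' w"
      unfolding reset by (cases rule: tilde_aux_ResetE) auto
    with reset env show ?thesis by (auto intro: head_step.reset simp: tilde_aux_is_val)
  qed
qed

definition upto_ctx :: "trm rel \<Rightarrow> (trm \<Rightarrow> trm \<Rightarrow> bool) \<Rightarrow> trm \<Rightarrow> trm \<Rightarrow> bool" where
  "upto_ctx R P t0 t1 \<longleftrightarrow> tilde_aux R t0 t1 \<or>
     (\<exists>F0 F1 u0 u1. hat R F0 F1 \<and> P u0 u1 \<and> t0 = plugF F0 u0 \<and> t1 = plugF F1 u1)"

lemma tilde_aux_step:
  assumes env: "is_env R" and "step t0 t0'" "tilde_aux R t0 t1" "closed t0" "closed t1"
  shows "\<exists>t1'. step t1 t1' \<and> upto_ctx R (env_test R) t0' t1'"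
proof -
  from \<open>step t0 t0'\<close> obtain F r r' where F: "evalctx F" and red: "head_step r r'"
    and t0: "t0 = plugF F r" and t0': "t0' = plugF F r'"
    unfolding step_iff_head_step by blast
  obtain F1 r1 where t1: "t1 = plugF F1 r1" and ctx: "hat R F F1" and rel: "tilde_aux R r r1"
    using tilde_aux_plugF_head_step[OF env F red] assms t0 by blast
  obtain r1' where red1: "head_step r1 r1'" and rel': "tilde_aux R r' r1' \<or> env_test R r' r1'"
    using tilde_aux_head_step[OF env red rel] assms t0 t1 closed_plugF by blast
  have "step t1 (plugF F1 r1')"
    using step_plugF[OF head_step_step[OF red1]] hat_evalctx[OF ctx] t1 by blast
  moreover have "upto_ctx R (env_test R) t0' (plugF F1 r1')"
    using rel' hat_plugF[OF ctx] ctx t0' unfolding upto_ctx_def by blast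
  ultimately show ?thesis by blast
qed

lemma tilde_aux_step_back:
  assumes "is_env R" "step t1 t1'" "tilde_aux R t0 t1" "closed t0" "closed t1"
  shows "\<exists>t0'. step t0 t0'"
  using tilde_aux_step[of "R\<inverse>" t1 t1' t0] assms by (auto simp: tilde_aux_converse)

section \<open>Environmental bisimulation up to context\<close>

text \<open>Clauses (1a)--(1c) of environmental bisimulation; clause (1d) is the same for the converse.\<close>

definition sim_forward :: "envrel \<Rightarrow> trm rel \<Rightarrow> trm \<Rightarrow> trm \<Rightarrow> bool" where
  "sim_forward X E t0 t1 \<longleftrightarrow>
     (\<forall>t0'. step t0 t0' \<longrightarrow> (\<exists>t1'. steps t1 t1' \<and> (E, t0', t1') \<in> snd X)) \<and>
     (is_val t0 \<longrightarrow> (\<exists>v1. steps t1 v1 \<and> is_val v1 \<and> E \<union> {(t0, v1)} \<in> fst X)) \<and>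
     (stuck t0 \<longrightarrow> (\<exists>t1'. steps t1 t1' \<and> stuck t1' \<and> E \<union> {(t0, t1')} \<in> fst X))"

definition converse_envrel :: "envrel \<Rightarrow> envrel" where
  "converse_envrel X = (converse ` fst X, (\<lambda>(E, a, b). (E\<inverse>, b, a)) ` snd X)"

lemma fst_converse_envrel_iff [simp]: "E \<in> fst (converse_envrel X) \<longleftrightarrow> E\<inverse> \<in> fst X"
  unfolding converse_envrel_def by (auto intro: image_eqI[of _ _ "E\<inverse>"])

lemma snd_converse_envrel_iff [simp]: "(E, a, b) \<in> snd (converse_envrel X) \<longleftrightarrow> (E\<inverse>, b, a) \<in> snd X"
  unfolding converse_envrel_def by (auto intro: image_eqI[of _ _ "(E\<inverse>, b, a)"])

lemma converse_envrel_involutive [simp]: "converse_envrel (converse_envrel X) = X"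
proof (rule prod_eqI)
  show "fst (converse_envrel (converse_envrel X)) = fst X"
    by (rule set_eqI) simp
  show "snd (converse_envrel (converse_envrel X)) = snd X"
    by (rule set_eqI) (metis prod_cases3 snd_converse_envrel_iff converse_converse)
qed

lemma converse_insert_pair [simp]: "(insert (a, b) E)\<inverse> = insert (b, a) (E\<inverse>)"
  by auto

lemma env_bisim_iff:
  "env_bisim X \<longleftrightarrow> is_envrel X \<and>
     (\<forall>E t0 t1. (E, t0, t1) \<in> snd X \<longrightarrow>
        sim_forward X E t0 t1 \<and> sim_forward (converse_envrel X) (E\<inverse>) t1 t0) \<and>
     (\<forall>R \<in> fst X. \<forall>u0 u1. env_test R u0 u1 \<longrightarrow> (R, u0, u1) \<in> snd X)"
proof -
  have "(\<forall>u0 u1. env_test R u0 u1 \<longrightarrow> (R, u0, u1) \<in> snd X) \<longleftrightarrow>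
    (\<forall>b0 b1 v0 v1. (Lam b0, Lam b1) \<in> R \<longrightarrow> is_val v0 \<longrightarrow> is_val v1 \<longrightarrow>
         tilde R v0 v1 \<longrightarrow> (R, inst b0 v0, inst b1 v1) \<in> snd X) \<and>
    (\<forall>E0 E1 s0 s1 E0' E1'. pure E0 \<longrightarrow> pure E1 \<longrightarrow>
         (plugF E0 (Shift s0), plugF E1 (Shift s1)) \<in> R \<longrightarrow>
         pure E0' \<longrightarrow> pure E1' \<longrightarrow> hat R E0' E1' \<longrightarrow>
         (R, Reset (inst s0 (Lam (Reset (plugF (liftF E0') (plugF (liftF E0) (Var 0)))))),
          Reset (inst s1 (Lam (Reset (plugF (liftF E1') (plugF (liftF E1) (Var 0))))))) \<in> snd X)"
    for R
    by (auto elim!: env_test.cases intro: env_test.intros) (metis env_test.shift liftF_compF plugF_compF)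
  then show ?thesis
    unfolding env_bisim_def sim_forward_def by auto
qed

lemma env_bisim_envrel: "env_bisim X \<Longrightarrow> is_envrel X"
  by (simp add: env_bisim_def)

lemma env_bisim_env: "env_bisim X \<Longrightarrow> R \<in> fst X \<Longrightarrow> is_env R"
  using env_bisim_envrel unfolding is_envrel_def by blast

lemma env_bisim_triple:
  "env_bisim X \<Longrightarrow> (E, t0, t1) \<in> snd X \<Longrightarrow> is_env E \<and> closed t0 \<and> closed t1"
  using env_bisim_envrel unfolding is_envrel_def by fast

lemma env_bisim_sim_forward: "env_bisim X \<Longrightarrow> (E, t0, t1) \<in> snd X \<Longrightarrow> sim_forward X E t0 t1"
  unfolding env_bisim_iff by blast

lemma env_bisim_sim_backward:
  "env_bisim X \<Longrightarrow> (E, t0, t1) \<in> snd X \<Longrightarrow> sim_forward (converse_envrel X) (E\<inverse>) t1 t0"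
  unfolding env_bisim_iff by blast

lemma env_bisim_env_test: "env_bisim X \<Longrightarrow> R \<in> fst X \<Longrightarrow> env_test R u0 u1 \<Longrightarrow> (R, u0, u1) \<in> snd X"
  unfolding env_bisim_iff by blast

lemma env_bisim_converse_envrel:
  assumes X: "env_bisim X"
  shows "env_bisim (converse_envrel X)"
  unfolding env_bisim_iff
proof (intro conjI allI impI ballI)
  show "is_envrel (converse_envrel X)"
    unfolding is_envrel_def converse_envrel_def
    using env_bisim_env[OF X] env_bisim_triple[OF X] by auto
next
  fix E t0 t1 assume "(E, t0, t1) \<in> snd (converse_envrel X)"
  then show "sim_forward (converse_envrel X) E t0 t1"
    using env_bisim_sim_backward[OF X, of "E\<inverse>" t1 t0] by simp
next
  fix E t0 t1 assume "(E, t0, t1) \<in> snd (converse_envrel X)"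
  then show "sim_forward (converse_envrel (converse_envrel X)) (E\<inverse>) t1 t0"
    using env_bisim_sim_forward[OF X] by simp
next
  fix R u0 u1 assume "R \<in> fst (converse_envrel X)" "env_test R u0 u1"
  then show "(R, u0, u1) \<in> snd (converse_envrel X)"
    using env_bisim_env_test[OF X] env_test_converse by simp
qed

lemma env_bisim_normal_forms:
  assumes "env_bisim X" "(E, t0, t1) \<in> snd X" "normal_form t0" "normal_form t1"
  shows "E \<union> {(t0, t1)} \<in> fst X"
proof -
  obtain t1' where "steps t1 t1'" "E \<union> {(t0, t1')} \<in> fst X"
    using env_bisim_sim_forward[OF assms(1,2)] assms(3)
    unfolding sim_forward_def normal_form_def by blast
  moreover have "t1' = t1"
    using steps_irreducible \<open>steps t1 t1'\<close> normal_form_no_step[OF assms(4)] by blast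
  ultimately show ?thesis by simp
qed

lemma sim_forward_prefix: "steps t1 t1' \<Longrightarrow> sim_forward X E t0 t1' \<Longrightarrow> sim_forward X E t0 t1"
  unfolding sim_forward_def by (meson rtranclp_trans)

text \<open>Bisimulation up to context: the closure of X under the closures of its environments,
  where one pair of X may sit in the holes of related evaluation contexts.\<close>

definition ctx_envs :: "envrel \<Rightarrow> trm rel set" where
  "ctx_envs X = {E. is_env E \<and> (\<exists>R \<in> fst X. E \<subseteq> tilde_rel R)}"

definition ctx_triples :: "envrel \<Rightarrow> (trm rel \<times> trm \<times> trm) set" where
  "ctx_triples X = {(E, t0, t1). is_env E \<and> closed t0 \<and> closed t1 \<and>
     (\<exists>R \<in> fst X. E \<subseteq> tilde_rel R \<and> upto_ctx R (\<lambda>u0 u1. (R, u0, u1) \<in> snd X) t0 t1)}"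

definition ctx_closure :: "envrel \<Rightarrow> envrel" where
  "ctx_closure X = (ctx_envs X, ctx_triples X)"

lemma env_test_tilde_rel:
  assumes env: "is_env R" and E: "E \<subseteq> tilde_rel R" and test: "env_test E u0 u1"
  shows "tilde_aux R u0 u1 \<or> env_test R u0 u1"
  using test
proof cases
  case (lam b0 b1 v0 v1)
  have "tilde R v0 v1" using lam tilde_tilde_rel tilde_mono E by blast
  from lam E have "tilde_aux R (Lam b0) (Lam b1)" by (auto simp: tilde_rel_def tilde_def)
  then show ?thesis
  proof (cases rule: tilde_aux_LamE)
    case base then show ?thesis using lam \<open>tilde R v0 v1\<close> by (auto intro: env_test.lam)
  next
    case lam' : lam
    then show ?thesis using lam \<open>tilde R v0 v1\<close> tilde_aux_inst is_env_closed_rel[OF env]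
      by (auto simp: tilde_def)
  qed
next
  case (shift E0 E1 s0 s1 E0' E1')
  from shift E have pair: "tilde_aux R (plugF E0 (Shift s0)) (plugF E1 (Shift s1))"
    "closed (plugF E0 (Shift s0))" "closed (plugF E1 (Shift s1))"
    by (auto simp: tilde_rel_def tilde_def)
  obtain G0 G1 F0 F1 s1' where E0: "E0 = compF G0 F0" and E1: "plugF E1 (Shift s1) = plugF G1 (plugF F1 (Shift s1'))"
    and ctx: "hat R G0 G1" "pure G0" "pure G1" "pure F0" "pure F1"
    and rel: "(plugF F0 (Shift s0), plugF F1 (Shift s1')) \<in> R \<or> F0 = Hole \<and> F1 = Hole \<and> tilde_aux R s0 s1'"
    using tilde_aux_shift_form[OF env \<open>pure E0\<close> pair] by blast
  have "E1 = compF G1 F1" "s1 = s1'"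
    using plugF_Shift_inject[of E1 "compF G1 F1" s1 s1'] \<open>pure E1\<close> ctx E1 by auto
  moreover have hat_ext: "hat R (compF E0' G0) (compF E1' G1)"
    using hat_compF[OF hat_tilde_rel[OF hat_mono[OF \<open>hat E E0' E1'\<close> E]] ctx(1)] .
  moreover have "pure (compF E0' G0)" "pure (compF E1' G1)" using shift ctx by simp_all
  ultimately show ?thesis
    using shift_reducts_related[OF env hat_ext \<open>pure (compF E0' G0)\<close> \<open>pure (compF E1' G1)\<close>
        ctx(4,5) rel] shift E0 by simp
qed

lemma closed_rel_subset_tilde_rel: "closed_rel R \<Longrightarrow> R \<subseteq> S \<Longrightarrow> R \<subseteq> tilde_rel S"
  unfolding closed_rel_def tilde_rel_def tilde_def by (auto intro: tilde_aux.base)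

lemma upto_ctx_hole: "P u0 u1 \<Longrightarrow> upto_ctx R P u0 u1"
  unfolding upto_ctx_def by (metis hat.hole plugF.simps(1))

lemma upto_ctx_mono: "upto_ctx R P t0 t1 \<Longrightarrow> (\<And>u0 u1. P u0 u1 \<Longrightarrow> Q u0 u1) \<Longrightarrow> upto_ctx R Q t0 t1"
  unfolding upto_ctx_def by blast

lemma upto_ctx_converse: "upto_ctx R P t0 t1 \<Longrightarrow> upto_ctx (R\<inverse>) (\<lambda>u1 u0. P u0 u1) t1 t0"
  unfolding upto_ctx_def by (auto simp: tilde_aux_converse hat_converse)

lemma ctx_triplesI:
  "is_env E \<Longrightarrow> closed t0 \<Longrightarrow> closed t1 \<Longrightarrow> R \<in> fst X \<Longrightarrow> E \<subseteq> tilde_rel R \<Longrightarrow>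
   upto_ctx R (\<lambda>u0 u1. (R, u0, u1) \<in> snd X) t0 t1 \<Longrightarrow> (E, t0, t1) \<in> ctx_triples X"
  unfolding ctx_triples_def by blast

lemma sim_forward_tilde:
  assumes X: "env_bisim X" and R: "R \<in> fst X" and E: "is_env E" "E \<subseteq> tilde_rel R"
    and rel: "tilde_aux R t0 t1" and closed: "closed t0" "closed t1"
  shows "sim_forward (ctx_closure X) E t0 t1"
  unfolding sim_forward_def ctx_closure_def fst_conv snd_conv
proof (intro conjI allI impI)
  have env: "is_env R" using env_bisim_env[OF X R] .
  fix t0' assume red: "step t0 t0'"
  obtain t1' where red1: "step t1 t1'" and rel': "upto_ctx R (env_test R) t0' t1'"
    using tilde_aux_step[OF env red rel closed] by blast
  have "upto_ctx R (\<lambda>u0 u1. (R, u0, u1) \<in> snd X) t0' t1'"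
    using upto_ctx_mono[OF rel'] env_bisim_env_test[OF X R] .
  then have "(E, t0', t1') \<in> ctx_triples X"
    by (rule ctx_triplesI[OF E(1) step_closed[OF red closed(1)] step_closed[OF red1 closed(2)] R E(2)])
  with red1 show "\<exists>t1'. steps t1 t1' \<and> (E, t0', t1') \<in> ctx_triples X" by blast
next
  have env: "is_env R" using env_bisim_env[OF X R] .
  have new_env: "E \<union> {(t0, t1)} \<subseteq> tilde_rel R"
    using E(2) rel closed by (auto simp: tilde_rel_def tilde_def)
  {
    assume "is_val t0"
    moreover have "is_val t1" using tilde_aux_is_val[OF env rel] calculation by simp
    ultimately show "\<exists>v1. steps t1 v1 \<and> is_val v1 \<and> E \<union> {(t0, v1)} \<in> ctx_envs X"
      using is_env_insert[OF E(1) closed] new_env R unfolding ctx_envs_def by blast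
  next
    assume "stuck t0"
    moreover have "stuck t1"
      using calculation tilde_aux_is_val[OF env rel] tilde_aux_step_back[OF env _ rel closed]
      unfolding stuck_def by metis
    ultimately show "\<exists>t1'. steps t1 t1' \<and> stuck t1' \<and> E \<union> {(t0, t1')} \<in> ctx_envs X"
      using is_env_insert[OF E(1) closed] new_env R unfolding ctx_envs_def by blast
  }
qed

lemma sim_forward_plugF:
  assumes X: "env_bisim X" and R: "R \<in> fst X" and E: "is_env E" "E \<subseteq> tilde_rel R"
    and ctx: "hat R F0 F1" and u: "(R, u0, u1) \<in> snd X"
    and closed: "closed (plugF F0 u0)" "closed (plugF F1 u1)"
  shows "sim_forward (ctx_closure X) E (plugF F0 u0) (plugF F1 u1)"
proof (cases "\<exists>u0'. step u0 u0'")
  case True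
  then obtain u0' where "step u0 u0'" by blast
  have F: "evalctx F0" "evalctx F1" using hat_evalctx[OF ctx] by auto
  have red0: "step (plugF F0 u0) (plugF F0 u0')" using step_plugF[OF \<open>step u0 u0'\<close> F(1)] .
  obtain u1' where "steps u1 u1'" "(R, u0', u1') \<in> snd X"
    using env_bisim_sim_forward[OF X u] \<open>step u0 u0'\<close> unfolding sim_forward_def by blast
  then have "steps (plugF F1 u1) (plugF F1 u1')" "(E, plugF F0 u0', plugF F1 u1') \<in> ctx_triples X"
    using steps_plugF[OF _ F(2)] ctx_triplesI[OF E(1) _ _ R E(2)] step_closed[OF red0 closed(1)]
      steps_closed[OF steps_plugF[OF _ F(2)] closed(2)] ctx unfolding upto_ctx_def by blast+
  moreover have "\<not> is_val (plugF F0 u0)" "\<not> stuck (plugF F0 u0)"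
    using red0 val_no_step unfolding stuck_def by blast+
  ultimately show ?thesis
    using red0 step_deterministic unfolding sim_forward_def ctx_closure_def by auto
next
  case False
  then have "is_val u0 \<or> stuck u0" unfolding stuck_def by blast
  then obtain u1' where "steps u1 u1'" and R': "R \<union> {(u0, u1')} \<in> fst X"
    using env_bisim_sim_forward[OF X u] unfolding sim_forward_def by blast
  have F1: "evalctx F1" using hat_evalctx[OF ctx] by simp
  have "tilde_aux (R \<union> {(u0, u1')}) (plugF F0 u0) (plugF F1 u1')"
    using hat_plugF[OF hat_mono[OF ctx] tilde_aux.base] by blast
  moreover have "E \<subseteq> tilde_rel (R \<union> {(u0, u1')})" using E(2) tilde_rel_mono by blast
  moreover have "steps (plugF F1 u1) (plugF F1 u1')" using steps_plugF[OF \<open>steps u1 u1'\<close> F1] .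
  ultimately show ?thesis
    using sim_forward_prefix sim_forward_tilde[OF X R' E(1)] steps_closed closed by blast
qed

lemma sim_forward_ctx_triples:
  assumes X: "env_bisim X" and T: "(E, t0, t1) \<in> ctx_triples X"
  shows "sim_forward (ctx_closure X) E t0 t1"
proof -
  from T obtain R where "is_env E" "closed t0" "closed t1" "R \<in> fst X" "E \<subseteq> tilde_rel R"
    and "upto_ctx R (\<lambda>u0 u1. (R, u0, u1) \<in> snd X) t0 t1"
    unfolding ctx_triples_def by blast
  then show ?thesis
    unfolding upto_ctx_def using sim_forward_tilde[OF X] sim_forward_plugF[OF X] by blast
qed

lemma ctx_triples_converse_envrel_imp:
  assumes "(E, t0, t1) \<in> ctx_triples (converse_envrel X)"
  shows "(E\<inverse>, t1, t0) \<in> ctx_triples X"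
proof -
  from assms obtain R where "is_env E" "closed t0" "closed t1" "R\<inverse> \<in> fst X" "E \<subseteq> tilde_rel R"
    and "upto_ctx R (\<lambda>u0 u1. (R\<inverse>, u1, u0) \<in> snd X) t0 t1"
    unfolding ctx_triples_def by auto
  then show ?thesis
    using upto_ctx_converse ctx_triplesI[of "E\<inverse>" t1 t0 "R\<inverse>" X] by (simp add: tilde_rel_converse)
qed

lemma ctx_triples_converse_envrel:
  "(E, t0, t1) \<in> ctx_triples (converse_envrel X) \<longleftrightarrow> (E\<inverse>, t1, t0) \<in> ctx_triples X"
proof
  assume "(E\<inverse>, t1, t0) \<in> ctx_triples X"
  then have "(E\<inverse>, t1, t0) \<in> ctx_triples (converse_envrel (converse_envrel X))" by simp
  then show "(E, t0, t1) \<in> ctx_triples (converse_envrel X)"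
    using ctx_triples_converse_envrel_imp by fastforce
qed (rule ctx_triples_converse_envrel_imp)

lemma ctx_envs_converse_envrel: "E \<in> ctx_envs (converse_envrel X) \<longleftrightarrow> E\<inverse> \<in> ctx_envs X"
proof
  assume "E \<in> ctx_envs (converse_envrel X)"
  then obtain R where "is_env E" "R\<inverse> \<in> fst X" "E \<subseteq> tilde_rel R"
    unfolding ctx_envs_def by auto
  then show "E\<inverse> \<in> ctx_envs X"
    unfolding ctx_envs_def by (auto simp: tilde_rel_converse intro!: bexI[of _ "R\<inverse>"])
next
  assume "E\<inverse> \<in> ctx_envs X"
  then obtain R where "is_env E" "R \<in> fst X" "E\<inverse> \<subseteq> tilde_rel R"
    unfolding ctx_envs_def by auto
  then show "E \<in> ctx_envs (converse_envrel X)"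
    unfolding ctx_envs_def
    by (auto simp: tilde_rel_converse converse_subset_swap intro!: bexI[of _ "R\<inverse>"])
qed

lemma converse_envrel_ctx_closure: "converse_envrel (ctx_closure X) = ctx_closure (converse_envrel X)"
proof (rule prod_eqI)
  show "fst (converse_envrel (ctx_closure X)) = fst (ctx_closure (converse_envrel X))"
    by (rule set_eqI) (simp add: ctx_closure_def ctx_envs_converse_envrel)
  show "snd (converse_envrel (ctx_closure X)) = snd (ctx_closure (converse_envrel X))"
  proof (rule set_eqI)
    fix T :: "trm rel \<times> trm \<times> trm"
    obtain E a b where "T = (E, a, b)" by (cases T)
    then show "T \<in> snd (converse_envrel (ctx_closure X)) \<longleftrightarrow> T \<in> snd (ctx_closure (converse_envrel X))"
      by (simp add: ctx_closure_def ctx_triples_converse_envrel)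
  qed
qed

lemma env_test_ctx_triples:
  assumes X: "env_bisim X" and E: "E \<in> ctx_envs X" and test: "env_test E u0 u1"
  shows "(E, u0, u1) \<in> ctx_triples X"
proof -
  from E obtain R where envE: "is_env E" and R: "R \<in> fst X" and ER: "E \<subseteq> tilde_rel R"
    unfolding ctx_envs_def by blast
  have "tilde_aux R u0 u1 \<or> env_test R u0 u1"
    using env_test_tilde_rel[OF env_bisim_env[OF X R] ER test] .
  then have rel: "upto_ctx R (\<lambda>u0 u1. (R, u0, u1) \<in> snd X) u0 u1"
  proof
    assume "tilde_aux R u0 u1" then show ?thesis unfolding upto_ctx_def by blast
  next
    assume "env_test R u0 u1" then show ?thesis by (intro upto_ctx_hole env_bisim_env_test[OF X R])
  qed
  have "closed u0" "closed u1"
    using env_test_closed[OF test is_env_closed_rel[OF envE]] by auto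
  then show ?thesis using ctx_triplesI[OF envE _ _ R ER rel] by blast
qed

lemma env_bisim_ctx_closure:
  assumes X: "env_bisim X"
  shows "env_bisim (ctx_closure X)"
  unfolding env_bisim_iff
proof (intro conjI allI impI ballI)
  show "is_envrel (ctx_closure X)"
    unfolding is_envrel_def ctx_closure_def by (auto simp: ctx_envs_def ctx_triples_def)
next
  fix E t0 t1 assume "(E, t0, t1) \<in> snd (ctx_closure X)"
  then have T: "(E, t0, t1) \<in> ctx_triples X" by (simp add: ctx_closure_def)
  show "sim_forward (ctx_closure X) E t0 t1"
    using sim_forward_ctx_triples[OF X T] .
  have "(E\<inverse>, t1, t0) \<in> ctx_triples (converse_envrel X)"
    using T by (simp add: ctx_triples_converse_envrel)
  then show "sim_forward (converse_envrel (ctx_closure X)) (E\<inverse>) t1 t0"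
    using sim_forward_ctx_triples[OF env_bisim_converse_envrel[OF X]]
    by (simp add: converse_envrel_ctx_closure)
next
  fix E u0 u1 assume "E \<in> fst (ctx_closure X)" "env_test E u0 u1"
  then show "(E, u0, u1) \<in> snd (ctx_closure X)"
    using env_test_ctx_triples[OF X] by (simp add: ctx_closure_def)
qed

theorem lemma7:
  assumes "is_env \<E>"
    and "closed t0" and "closed t1"
    and "normal_form t0" and "normal_form t1"
    and "bisimilar \<E> t0 t1"
    and "closed (plugC C t0)" and "closed (plugC C t1)"
  shows "bisimilar \<E> (plugC C t0) (plugC C t1)"
proof -
  from \<open>bisimilar \<E> t0 t1\<close> obtain X where X: "env_bisim X" and T: "(\<E>, t0, t1) \<in> snd X"
    unfolding bisimilar_def by blast
  let ?R = "\<E> \<union> {(t0, t1)}"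
  have R: "?R \<in> fst X" using env_bisim_normal_forms[OF X T assms(4,5)] .
  have "\<E> \<subseteq> tilde_rel ?R" using closed_rel_subset_tilde_rel is_env_closed_rel[OF assms(1)] by blast
  moreover have "tilde_aux ?R (plugC C t0) (plugC C t1)" by (rule tilde_aux_plugC) (simp add: tilde_aux.base)
  ultimately have "(\<E>, plugC C t0, plugC C t1) \<in> ctx_triples X"
    using ctx_triplesI[OF assms(1,7,8) R] unfolding upto_ctx_def by blast
  then show ?thesis
    using env_bisim_ctx_closure[OF X] unfolding bisimilar_def by (metis ctx_closure_def snd_conv)
qed

end
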